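(* There is a functor $\mathrm{Coll}:\mathbf{OpCat}\to\mathbf{SkewMonCat}$ sending an operadic category $\mathcal C$ to the skew monoidal category $\mathrm{Coll}_{\mathcal C}(\mathbf{Set})$. Moreover, an operadic category $\mathcal C$ is a genuine operadic category if and only if the left unit constraint $\lambda$ of $\mathrm{Coll}_{\mathcal C}(\mathbf{Set})$ is invertible.
   Context: Operadic categories: $\mathcal S$ is a skeleton of finite sets (objects $\mathbb N$), with fixed equivalences $R_I:\mathcal S/I\to\mathcal S^I$ sending $f:J\to I$ to its fibres. An operadic category is a category $\mathcal C$ with a functor $|\cdot|:\mathcal C\to\mathcal S$ and functors $R_c:\mathcal C/c\to\mathcal C^{|c|}$ with $|\cdot|^{|c|}\circ R_c=R_{|c|}\circ(|\cdot|/c)$; the fibre $\psi^{-1}i$ of $\psi:c\to d$ at $i\in|d|$ is the $i$-th component of $R_d(\psi)$; for $\varphi:b\to c,\psi:c\to d$, $\varphi^\psi=R_d(\varphi:\psi\varphi\to\psi)$ with components $\varphi^\psi_j:(\psi\varphi)^{-1}j\to\psi^{-1}j$; $u$ is trivial if $|u|=1$ and $R_u=\mathrm{dom}$. Axioms: fibres of identities are trivial; double slice condition: for $\psi:c\to d$, $R_c\circ(\mathrm{dom}/\psi)=(\cong)\circ(\prod_jR_{\psi^{-1}j})\circ(R_d/\psi)$ as functors $(\mathcal C/d)/\psi\to\mathcal C^{|c|}$, via $\mathcal C^{|d|}/R_d\psi\cong\prod_j\mathcal C/\psi^{-1}j$ and $|c|\cong\sum_j|\psi|^{-1}j$. A strict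 operadic functor $F:\mathcal C\to\mathcal D$ is a functor with $|F(-)|=|-|$ and $R_{Fc}\circ(F/c)=F^{|c|}\circ R_c$ for all $c$. $\mathbf{OpCat}$ is the category of operadic categories and strict operadic functors. An operadic category is genuine if each connected component contains exactly one trivial object and that object is terminal in the component. $\mathrm{Coll}_{\mathcal C}(\mathbf{Set})$: with $C$ the object set of $\mathcal C$, the underlying category is $\mathbf{Set}/C$ (objects $\partial:X\to C$, $X_c=\partial^{-1}c$); $(X*Y)_c=\sum_{\varphi:c\to d}X_d\times\prod_{i\in|d|}Y_{\varphi^{-1}i}$ (elements $(x,\varphi,y)$); unit $U$ = set of trivial objects; $\alpha(x,\psi,y,\varphi,z)=(x,\psi\varphi,y,\varphi^\psi,z)$, $\lambda(u,\varphi,x)=x$, $\rho(x)=(x,1_{\partial x},(1_{\partial x}^{-1}i)_i)$. This is a skew monoidal category: a category with tensor $*$, unit $U$, and natural maps $\alpha:(X*Y)*Z\to X*(Y*Z)$, $\lambda:U*X\to X$, $\rho:X\to X*U$ (not necessarily invertible) satisfying the five coherence axioms $\lambda_U\rho_U=1$, $\lambda\alpha=\lambda*1$, $\alpha\rho=1*\rho$, $(1*\lambda)\alpha(\rho*1)=1$, and the pentagon. $\mathbf{SkewMonCat}$ has skew monoidal categories as objects and opmonoidal functors as morphisms: an opmonoidal functor $(\mathcal E,*,U)\to(\mathcal F,*,V)$ is a functor $F$ with natural $F^2:F(X*Y)\to FX*FY$ and $F^0:FU\to V$ such that $\alpha\circ(F^2*1)\circ F^2=(1*F^2)\circ F^2\circ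 F\alpha$, $\lambda\circ(F^0*1)\circ F^2=F\lambda$, and $(1*F^0)\circ F^2\circ F\rho=\rho$. *)

theory Defs
  imports Main
begin

section \<open>The skeleton S of finite sets\<close>

text \<open>An object n of S is the set {0..<n}; a morphism m -> n is a function
  defined on {0..<m} with values in {0..<n}.  The fixed equivalence
  R_I : S/I -> S^I sends f : J -> I to the family of its fibres, each fibre
  identified with an object of S by the order-preserving enumeration.\<close>

definition sfib_elem :: "(nat \<Rightarrow> nat) \<Rightarrow> nat \<Rightarrow> nat \<Rightarrow> nat \<Rightarrow> nat" where
  "sfib_elem f m i r = sorted_list_of_set {k. k < m \<and> f k = i} ! r"

definition srank :: "(nat \<Rightarrow> nat) \<Rightarrow> nat \<Rightarrow> nat" where
  "srank f k = card {k'. k' < k \<and> f k' = f k}"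

record ('o, 'm) opcat =
  Obj  :: "'o set"
  Arr  :: "'m set"
  Dom  :: "'m \<Rightarrow> 'o"
  Cod  :: "'m \<Rightarrow> 'o"
  Idt  :: "'o \<Rightarrow> 'm"
  Comp :: "'m \<Rightarrow> 'm \<Rightarrow> 'm"          (* Comp g f = g \<circ> f *)
  Card :: "'o \<Rightarrow> nat"
  Fmap :: "'m \<Rightarrow> nat \<Rightarrow> nat"
  Fib  :: "'m \<Rightarrow> nat \<Rightarrow> 'o"            (* Fib psi i = psi^{-1} i *)
  Fibm :: "'m \<Rightarrow> 'm \<Rightarrow> nat \<Rightarrow> 'm"      (* Fibm phi psi j = phi^psi_j *)

definition is_category :: "('o, 'm) opcat \<Rightarrow> bool" where
  "is_category C \<longleftrightarrow>
     (\<forall>f\<in>Arr C. Dom C f \<in> Obj C \<and> Cod C f \<in> Obj C) \<and>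
     (\<forall>c\<in>Obj C. Idt C c \<in> Arr C \<and> Dom C (Idt C c) = c \<and> Cod C (Idt C c) = c) \<and>
     (\<forall>f\<in>Arr C. \<forall>g\<in>Arr C. Cod C f = Dom C g \<longrightarrow>
        Comp C g f \<in> Arr C \<and> Dom C (Comp C g f) = Dom C f \<and> Cod C (Comp C g f) = Cod C g) \<and>
     (\<forall>f\<in>Arr C. Comp C (Idt C (Cod C f)) f = f \<and> Comp C f (Idt C (Dom C f)) = f) \<and>
     (\<forall>f\<in>Arr C. \<forall>g\<in>Arr C. \<forall>h\<in>Arr C. Cod C f = Dom C g \<and> Cod C g = Dom C h \<longrightarrow>
        Comp C h (Comp C g f) = Comp C (Comp C h g) f)"

definition card_functor :: "('o, 'm) opcat \<Rightarrow> bool" where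
  "card_functor C \<longleftrightarrow>
     (\<forall>f\<in>Arr C. \<forall>k < Card C (Dom C f). Fmap C f k < Card C (Cod C f)) \<and>
     (\<forall>c\<in>Obj C. \<forall>k < Card C c. Fmap C (Idt C c) k = k) \<and>
     (\<forall>f\<in>Arr C. \<forall>g\<in>Arr C. Cod C f = Dom C g \<longrightarrow>
        (\<forall>k < Card C (Dom C f). Fmap C (Comp C g f) k = Fmap C g (Fmap C f k)))"

text \<open>The functors R_c : C/c -> C^{|c|}.  An object of C/c is f : a -> c, it is
  sent to the family (Fib f i)_i; a morphism h : (g h) -> g of C/c is sent to
  the family (Fibm h g i)_i.\<close>
definition fibre_functors :: "('o, 'm) opcat \<Rightarrow> bool" where
  "fibre_functors C \<longleftrightarrow>
     (\<forall>f\<in>Arr C. \<forall>i < Card C (Cod C f). Fib C f i \<in> Obj C) \<and>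
     (\<forall>h\<in>Arr C. \<forall>g\<in>Arr C. Cod C h = Dom C g \<longrightarrow> (\<forall>i < Card C (Cod C g).
        Fibm C h g i \<in> Arr C \<and> Dom C (Fibm C h g i) = Fib C (Comp C g h) i \<and>
        Cod C (Fibm C h g i) = Fib C g i)) \<and>
     (\<forall>g\<in>Arr C. \<forall>i < Card C (Cod C g). Fibm C (Idt C (Dom C g)) g i = Idt C (Fib C g i)) \<and>
     (\<forall>h\<in>Arr C. \<forall>h'\<in>Arr C. \<forall>g\<in>Arr C. Cod C h = Dom C h' \<and> Cod C h' = Dom C g \<longrightarrow>
        (\<forall>i < Card C (Cod C g).
           Fibm C (Comp C h' h) g i = Comp C (Fibm C h' g i) (Fibm C h (Comp C g h') i)))"

text \<open>Compatibility |-|^{|c|} o R_c = R_{|c|} o (|-|/c).\<close>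
definition card_compat :: "('o, 'm) opcat \<Rightarrow> bool" where
  "card_compat C \<longleftrightarrow>
     (\<forall>f\<in>Arr C. \<forall>i < Card C (Cod C f).
        Card C (Fib C f i) = card {k. k < Card C (Dom C f) \<and> Fmap C f k = i}) \<and>
     (\<forall>h\<in>Arr C. \<forall>g\<in>Arr C. Cod C h = Dom C g \<longrightarrow> (\<forall>i < Card C (Cod C g).
        \<forall>r < Card C (Fib C (Comp C g h) i).
          Fmap C (Fibm C h g i) r =
            srank (Fmap C g) (Fmap C h (sfib_elem (Fmap C (Comp C g h)) (Card C (Dom C h)) i r))))"

text \<open>Trivial objects: |u| = 1 and R_u = dom.\<close>
definition trivial :: "('o, 'm) opcat \<Rightarrow> 'o \<Rightarrow> bool" where
  "trivial C u \<longleftrightarrow> u \<in> Obj C \<and> Card C u = 1 \<and>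
     (\<forall>f\<in>Arr C. Cod C f = u \<longrightarrow> Fib C f 0 = Dom C f) \<and>
     (\<forall>h\<in>Arr C. \<forall>g\<in>Arr C. Cod C h = Dom C g \<and> Cod C g = u \<longrightarrow> Fibm C h g 0 = h)"

text \<open>Double slice condition, on objects and on morphisms of (C/d)/psi; the
  index k of |c| corresponds to the pair (|psi| k, position of k in its fibre).\<close>
definition double_slice :: "('o, 'm) opcat \<Rightarrow> bool" where
  "double_slice C \<longleftrightarrow>
     (\<forall>\<phi>\<in>Arr C. \<forall>\<psi>\<in>Arr C. Cod C \<phi> = Dom C \<psi> \<longrightarrow> (\<forall>k < Card C (Cod C \<phi>).
        Fib C \<phi> k = Fib C (Fibm C \<phi> \<psi> (Fmap C \<psi> k)) (srank (Fmap C \<psi>) k))) \<and>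
     (\<forall>h\<in>Arr C. \<forall>\<phi>\<in>Arr C. \<forall>\<psi>\<in>Arr C. Cod C h = Dom C \<phi> \<and> Cod C \<phi> = Dom C \<psi> \<longrightarrow>
        (\<forall>k < Card C (Cod C \<phi>).
          Fibm C h \<phi> k =
            Fibm C (Fibm C h (Comp C \<psi> \<phi>) (Fmap C \<psi> k)) (Fibm C \<phi> \<psi> (Fmap C \<psi> k))
                   (srank (Fmap C \<psi>) k)))"

definition opcat :: "('o, 'm) opcat \<Rightarrow> bool" where
  "opcat C \<longleftrightarrow> is_category C \<and> card_functor C \<and> fibre_functors C \<and> card_compat C \<and>
     (\<forall>c\<in>Obj C. \<forall>i < Card C c. trivial C (Fib C (Idt C c) i)) \<and>
     double_slice C"

definition strict_opfunctor ::
  "('o, 'm) opcat \<Rightarrow> ('o2, 'm2) opcat \<Rightarrow> ('o \<Rightarrow> 'o2) \<times> ('m \<Rightarrow> 'm2) \<Rightarrow> bool" where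
  "strict_opfunctor C D F \<longleftrightarrow>
     (\<forall>c\<in>Obj C. fst F c \<in> Obj D) \<and> (\<forall>f\<in>Arr C. snd F f \<in> Arr D) \<and>
     (\<forall>f\<in>Arr C. Dom D (snd F f) = fst F (Dom C f) \<and> Cod D (snd F f) = fst F (Cod C f)) \<and>
     (\<forall>c\<in>Obj C. snd F (Idt C c) = Idt D (fst F c)) \<and>
     (\<forall>f\<in>Arr C. \<forall>g\<in>Arr C. Cod C f = Dom C g \<longrightarrow> snd F (Comp C g f) = Comp D (snd F g) (snd F f)) \<and>
     (\<forall>c\<in>Obj C. Card D (fst F c) = Card C c) \<and>
     (\<forall>f\<in>Arr C. \<forall>k < Card C (Dom C f). Fmap D (snd F f) k = Fmap C f k) \<and>
     (\<forall>f\<in>Arr C. \<forall>i < Card C (Cod C f). Fib D (snd F f) i = fst F (Fib C f i)) \<and>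
     (\<forall>h\<in>Arr C. \<forall>g\<in>Arr C. Cod C h = Dom C g \<longrightarrow> (\<forall>i < Card C (Cod C g).
        Fibm D (snd F h) (snd F g) i = snd F (Fibm C h g i)))"

definition opfun_id :: "('o \<Rightarrow> 'o) \<times> ('m \<Rightarrow> 'm)" where
  "opfun_id = (\<lambda>c. c, \<lambda>f. f)"

definition opfun_comp ::
  "('o2 \<Rightarrow> 'o3) \<times> ('m2 \<Rightarrow> 'm3) \<Rightarrow> ('o \<Rightarrow> 'o2) \<times> ('m \<Rightarrow> 'm2) \<Rightarrow> ('o \<Rightarrow> 'o3) \<times> ('m \<Rightarrow> 'm3)" where
  "opfun_comp G F = (fst G \<circ> fst F, snd G \<circ> snd F)"

definition arr_rel :: "('o, 'm) opcat \<Rightarrow> ('o \<times> 'o) set" where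
  "arr_rel C = {(Dom C f, Cod C f) | f. f \<in> Arr C}"

definition connected :: "('o, 'm) opcat \<Rightarrow> 'o \<Rightarrow> 'o \<Rightarrow> bool" where
  "connected C a b \<longleftrightarrow> a \<in> Obj C \<and> b \<in> Obj C \<and> (a, b) \<in> (arr_rel C \<union> (arr_rel C)\<inverse>)\<^sup>*"

definition genuine :: "('o, 'm) opcat \<Rightarrow> bool" where
  "genuine C \<longleftrightarrow>
     (\<forall>c\<in>Obj C. \<exists>!u. trivial C u \<and> connected C c u) \<and>
     (\<forall>u c. trivial C u \<and> connected C c u \<longrightarrow>
        (\<exists>!f. f \<in> Arr C \<and> Dom C f = c \<and> Cod C f = u))"

section \<open>The skew monoidal category Coll_C(Set)\<close>

text \<open>An object of Set/C is a set X of elements together with a map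
  \<open>\<partial> : X \<rightarrow> C\<close> (C the object set).  Families indexed by |d| are lists of length |d|.\<close>

type_synonym ('a, 'o) coll = "'a set \<times> ('a \<Rightarrow> 'o)"

definition is_coll :: "('o, 'm) opcat \<Rightarrow> ('a, 'o) coll \<Rightarrow> bool" where
  "is_coll C X \<longleftrightarrow> snd X ` fst X \<subseteq> Obj C"

definition coll_hom :: "('o, 'm) opcat \<Rightarrow> ('a, 'o) coll \<Rightarrow> ('b, 'o) coll \<Rightarrow> ('a \<Rightarrow> 'b) \<Rightarrow> bool" where
  "coll_hom C X Y f \<longleftrightarrow> (\<forall>x\<in>fst X. f x \<in> fst Y \<and> snd Y (f x) = snd X x)"

definition coll_iso :: "('o, 'm) opcat \<Rightarrow> ('a, 'o) coll \<Rightarrow> ('b, 'o) coll \<Rightarrow> ('a \<Rightarrow> 'b) \<Rightarrow> bool" where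
  "coll_iso C X Y f \<longleftrightarrow> coll_hom C X Y f \<and>
     (\<exists>g. coll_hom C Y X g \<and> (\<forall>x\<in>fst X. g (f x) = x) \<and> (\<forall>y\<in>fst Y. f (g y) = y))"

definition coll_tensor ::
  "('o, 'm) opcat \<Rightarrow> ('a, 'o) coll \<Rightarrow> ('b, 'o) coll \<Rightarrow> ('a \<times> 'm \<times> 'b list, 'o) coll" where
  "coll_tensor C X Y =
     ({(x, \<phi>, ys) | x \<phi> ys. \<phi> \<in> Arr C \<and> x \<in> fst X \<and> snd X x = Cod C \<phi> \<and>
          length ys = Card C (Cod C \<phi>) \<and>
          (\<forall>i < length ys. ys ! i \<in> fst Y \<and> snd Y (ys ! i) = Fib C \<phi> i)},
      \<lambda>(x, \<phi>, ys). Dom C \<phi>)"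

definition coll_unit :: "('o, 'm) opcat \<Rightarrow> ('o, 'o) coll" where
  "coll_unit C = ({u. trivial C u}, \<lambda>u. u)"

definition tensor_hom :: "('a \<Rightarrow> 'a2) \<Rightarrow> ('b \<Rightarrow> 'b2) \<Rightarrow> 'a \<times> 'm \<times> 'b list \<Rightarrow> 'a2 \<times> 'm \<times> 'b2 list" where
  "tensor_hom f g = (\<lambda>(x, \<phi>, ys). (f x, \<phi>, map g ys))"

text \<open>alpha(x, psi, y, phi, z) = (x, psi phi, y, phi^psi, z).\<close>
definition coll_alpha :: "('o, 'm) opcat \<Rightarrow>
    ('a \<times> 'm \<times> 'b list) \<times> 'm \<times> 'c list \<Rightarrow> 'a \<times> 'm \<times> ('b \<times> 'm \<times> 'c list) list" where
  "coll_alpha C = (\<lambda>((x, \<psi>, ys), \<phi>, zs).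
     (x, Comp C \<psi> \<phi>,
      map (\<lambda>j. (ys ! j, Fibm C \<phi> \<psi> j,
                 map (\<lambda>r. zs ! sfib_elem (Fmap C \<psi>) (Card C (Dom C \<psi>)) j r)
                     [0..<Card C (Fib C \<psi> j)]))
          [0..<Card C (Cod C \<psi>)]))"

definition coll_lambda :: "'o \<times> 'm \<times> 'a list \<Rightarrow> 'a" where
  "coll_lambda = (\<lambda>(u, \<phi>, xs). xs ! 0)"

definition coll_rho :: "('o, 'm) opcat \<Rightarrow> ('a, 'o) coll \<Rightarrow> 'a \<Rightarrow> 'a \<times> 'm \<times> 'o list" where
  "coll_rho C X = (\<lambda>x. (x, Idt C (snd X x),
                         map (\<lambda>i. Fib C (Idt C (snd X x)) i) [0..<Card C (snd X x)]))"

definition coll_skew_axioms :: "('o, 'm) opcat \<Rightarrow>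
    ('a, 'o) coll \<Rightarrow> ('b, 'o) coll \<Rightarrow> ('c, 'o) coll \<Rightarrow> ('d, 'o) coll \<Rightarrow> bool" where
  "coll_skew_axioms C W X Y Z \<longleftrightarrow>
     is_coll C (coll_tensor C X Y) \<and> is_coll C (coll_unit C) \<and>
     coll_hom C (coll_tensor C (coll_tensor C X Y) Z) (coll_tensor C X (coll_tensor C Y Z)) (coll_alpha C) \<and>
     coll_hom C (coll_tensor C (coll_unit C) X) X coll_lambda \<and>
     coll_hom C X (coll_tensor C X (coll_unit C)) (coll_rho C X) \<and>
     (\<forall>u\<in>fst (coll_unit C). coll_lambda (coll_rho C (coll_unit C) u) = u) \<and>
     (\<forall>t\<in>fst (coll_tensor C (coll_tensor C (coll_unit C) X) Y).
        coll_lambda (coll_alpha C t) = tensor_hom coll_lambda id t) \<and>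
     (\<forall>t\<in>fst (coll_tensor C X Y).
        coll_alpha C (coll_rho C (coll_tensor C X Y) t) = tensor_hom id (coll_rho C Y) t) \<and>
     (\<forall>t\<in>fst (coll_tensor C X Y).
        tensor_hom id coll_lambda (coll_alpha C (tensor_hom (coll_rho C X) id t)) = t) \<and>
     (\<forall>t\<in>fst (coll_tensor C (coll_tensor C (coll_tensor C W X) Y) Z).
        coll_alpha C (coll_alpha C t) =
        tensor_hom id (coll_alpha C) (coll_alpha C (tensor_hom (coll_alpha C) id t)))"

definition coll_tensor_functorial :: "('o, 'm) opcat \<Rightarrow>
    ('a, 'o) coll \<Rightarrow> ('a2, 'o) coll \<Rightarrow> ('a3, 'o) coll \<Rightarrow>
    ('b, 'o) coll \<Rightarrow> ('b2, 'o) coll \<Rightarrow> ('b3, 'o) coll \<Rightarrow>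
    ('a \<Rightarrow> 'a2) \<Rightarrow> ('a2 \<Rightarrow> 'a3) \<Rightarrow> ('b \<Rightarrow> 'b2) \<Rightarrow> ('b2 \<Rightarrow> 'b3) \<Rightarrow> bool" where
  "coll_tensor_functorial C X X' X'' Y Y' Y'' f f' g g' \<longleftrightarrow>
     (coll_hom C X X' f \<and> coll_hom C Y Y' g \<longrightarrow>
        coll_hom C (coll_tensor C X Y) (coll_tensor C X' Y') (tensor_hom f g)) \<and>
     (\<forall>t\<in>fst (coll_tensor C X Y). tensor_hom id id t = t) \<and>
     (\<forall>t\<in>fst (coll_tensor C X Y).
        tensor_hom (f' \<circ> f) (g' \<circ> g) t = tensor_hom f' g' (tensor_hom f g t))"

definition coll_skew_natural :: "('o, 'm) opcat \<Rightarrow>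
    ('a, 'o) coll \<Rightarrow> ('a2, 'o) coll \<Rightarrow> ('b, 'o) coll \<Rightarrow> ('b2, 'o) coll \<Rightarrow>
    ('c, 'o) coll \<Rightarrow> ('c2, 'o) coll \<Rightarrow>
    ('a \<Rightarrow> 'a2) \<Rightarrow> ('b \<Rightarrow> 'b2) \<Rightarrow> ('c \<Rightarrow> 'c2) \<Rightarrow> bool" where
  "coll_skew_natural C X X' Y Y' Z Z' f g h \<longleftrightarrow>
     (coll_hom C X X' f \<and> coll_hom C Y Y' g \<and> coll_hom C Z Z' h \<longrightarrow>
        (\<forall>t\<in>fst (coll_tensor C (coll_tensor C X Y) Z).
           coll_alpha C (tensor_hom (tensor_hom f g) h t) =
           tensor_hom f (tensor_hom g h) (coll_alpha C t)) \<and>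
        (\<forall>t\<in>fst (coll_tensor C (coll_unit C) X).
           coll_lambda (tensor_hom id f t) = f (coll_lambda t)) \<and>
        (\<forall>x\<in>fst X. coll_rho C X' (f x) = tensor_hom f id (coll_rho C X x)))"

text \<open>Coll(F) = F_! : Set/C -> Set/D, (F_! X)_d = sum over F c = d of X_c; on morphisms
  it is the identity on underlying functions.\<close>

definition coll_push :: "('o \<Rightarrow> 'o2) \<times> ('m \<Rightarrow> 'm2) \<Rightarrow> ('a, 'o) coll \<Rightarrow> ('a, 'o2) coll" where
  "coll_push F X = (fst X, fst F \<circ> snd X)"

definition coll_F2 :: "('o \<Rightarrow> 'o2) \<times> ('m \<Rightarrow> 'm2) \<Rightarrow> 'a \<times> 'm \<times> 'b list \<Rightarrow> 'a \<times> 'm2 \<times> 'b list" where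
  "coll_F2 F = (\<lambda>(x, \<phi>, ys). (x, snd F \<phi>, ys))"

definition coll_F0 :: "('o \<Rightarrow> 'o2) \<times> ('m \<Rightarrow> 'm2) \<Rightarrow> 'o \<Rightarrow> 'o2" where
  "coll_F0 F = fst F"

definition coll_opmonoidal :: "('o, 'm) opcat \<Rightarrow> ('o2, 'm2) opcat \<Rightarrow> ('o \<Rightarrow> 'o2) \<times> ('m \<Rightarrow> 'm2) \<Rightarrow>
    ('a, 'o) coll \<Rightarrow> ('a2, 'o) coll \<Rightarrow> ('b, 'o) coll \<Rightarrow> ('b2, 'o) coll \<Rightarrow> ('c, 'o) coll \<Rightarrow>
    ('a \<Rightarrow> 'a2) \<Rightarrow> ('b \<Rightarrow> 'b2) \<Rightarrow> bool" where
  "coll_opmonoidal C D F X X' Y Y' Z f g \<longleftrightarrow>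
     (is_coll C X \<longrightarrow> is_coll D (coll_push F X)) \<and>
     (coll_hom C X X' f \<longrightarrow> coll_hom D (coll_push F X) (coll_push F X') f) \<and>
     coll_hom D (coll_push F (coll_tensor C X Y))
                (coll_tensor D (coll_push F X) (coll_push F Y)) (coll_F2 F) \<and>
     coll_hom D (coll_push F (coll_unit C)) (coll_unit D) (coll_F0 F) \<and>
     (coll_hom C X X' f \<and> coll_hom C Y Y' g \<longrightarrow>
        (\<forall>t\<in>fst (coll_tensor C X Y). coll_F2 F (tensor_hom f g t) = tensor_hom f g (coll_F2 F t))) \<and>
     (\<forall>t\<in>fst (coll_tensor C (coll_tensor C X Y) Z).
        coll_alpha D (tensor_hom (coll_F2 F) id (coll_F2 F t)) =
        tensor_hom id (coll_F2 F) (coll_F2 F (coll_alpha C t))) \<and>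
     (\<forall>t\<in>fst (coll_tensor C (coll_unit C) X).
        coll_lambda (tensor_hom (coll_F0 F) id (coll_F2 F t)) = coll_lambda t) \<and>
     (\<forall>x\<in>fst X.
        tensor_hom id (coll_F0 F) (coll_F2 F (coll_rho C X x)) = coll_rho D (coll_push F X) x)"

end

theory Submission
  imports Defs
begin

text \<open>An element of \<open>X * Y\<close> over \<open>c\<close> is an \<open>x \<in> X\<close> over \<open>d\<close>, an arrow \<open>\<phi> : c \<rightarrow> d\<close> and a family
  of elements of \<open>Y\<close> over the fibres of \<open>\<phi>\<close>.  The associator restricts the outer family to the
  fibres of \<open>\<psi>\<close>, so that its well-definedness and the coherence axioms reduce to the double slice
  condition in \<open>C\<close> together with the double slice condition in the skeleton of finite sets: restricting
  along the fibres of \<open>\<chi> \<psi>\<close> and then along those of \<open>\<psi>\<^sub>i\<close> is restricting along those of \<open>\<psi>\<close>.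
  Strict operadic functors preserve everything in sight, whence opmonoidality.

  An element of \<open>U * X\<close> over \<open>c\<close> is an arrow from \<open>c\<close> to a trivial object together with an element
  of \<open>X\<close> over \<open>c\<close>, and \<open>\<lambda>\<close> forgets the arrow.  So \<open>\<lambda>\<close> is invertible (test it on a one-point
  collection) iff every object has exactly one arrow to a trivial object.  Precomposition shows that the
  target of that arrow is constant on connected components, which is genuineness.\<close>

section \<open>Enumerating the fibres of maps of finite sets\<close>

lemma sorted_list_of_set_nth_mem:
  fixes S :: "'a::linorder set"
  assumes "finite S" "r < card S"
  shows "sorted_list_of_set S ! r \<in> S"
  using assms by (metis nth_mem sorted_list_of_set.length_sorted_key_list_of_set
      sorted_list_of_set.set_sorted_key_list_of_set)

lemma card_less_sorted_list_of_set_nth: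
  fixes S :: "'a::linorder set"
  assumes "finite S" "r < card S"
  shows "card {y\<in>S. y < sorted_list_of_set S ! r} = r"
proof -
  let ?xs = "sorted_list_of_set S"
  have sorted: "sorted_wrt (<) ?xs" and len: "length ?xs = card S" and set: "set ?xs = S"
    using assms(1) by auto
  have "{y\<in>S. y < ?xs ! r} = set (take r ?xs)"
  proof (intro set_eqI iffI)
    fix y assume "y \<in> set (take r ?xs)"
    then obtain j where "j < r" "y = ?xs ! j"
      using len assms(2) by (auto simp: in_set_conv_nth)
    then show "y \<in> {y\<in>S. y < ?xs ! r}"
      using sorted len set assms(2) by (auto simp: sorted_wrt_iff_nth_less)
  next
    fix y assume y: "y \<in> {y\<in>S. y < ?xs ! r}"
    then obtain j where j: "j < card S" "y = ?xs ! j"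
      using len set by (metis (no_types, lifting) in_set_conv_nth mem_Collect_eq)
    have "j < r"
    proof (rule ccontr)
      assume "\<not> j < r"
      then have "?xs ! r \<le> ?xs ! j"
        using sorted j(1) len by (metis linorder_not_less order.order_iff_strict sorted_wrt_nth_less)
      then show False using y j(2) by (auto dest: leD)
    qed
    then show "y \<in> set (take r ?xs)"
      using j len assms(2) by (auto simp: in_set_conv_nth)
  qed
  moreover have "distinct ?xs" by simp
  ultimately show ?thesis using len assms(2) by (simp add: distinct_card)
qed

lemma sorted_list_of_set_nth_card_less:
  fixes S :: "'a::linorder set"
  assumes "finite S" "x \<in> S"
  shows "card {y\<in>S. y < x} < card S" "sorted_list_of_set S ! card {y\<in>S. y < x} = x"
proof -
  obtain j where "j < card S" "x = sorted_list_of_set S ! j"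
    using assms by (metis in_set_conv_nth sorted_list_of_set.length_sorted_key_list_of_set
        sorted_list_of_set.set_sorted_key_list_of_set)
  then show "card {y\<in>S. y < x} < card S" "sorted_list_of_set S ! card {y\<in>S. y < x} = x"
    using card_less_sorted_list_of_set_nth[OF assms(1)] by auto
qed

lemma sorted_list_of_set_image_strict_mono:
  fixes e :: "'a::linorder \<Rightarrow> 'b::linorder"
  assumes "strict_mono_on B e" "finite B"
  shows "sorted_list_of_set (e ` B) = map e (sorted_list_of_set B)"
proof -
  have "sorted_wrt (\<lambda>x y. e x < e y) (sorted_list_of_set B)"
    by (rule sorted_wrt_mono_rel[OF _ strict_sorted_list_of_set])
       (use assms in \<open>auto simp: strict_mono_on_def\<close>)
  then have "sorted_wrt (<) (map e (sorted_list_of_set B))"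
    by (simp add: sorted_wrt_map)
  then show ?thesis
    using assms(2) sorted_list_of_set.idem_if_sorted_distinct[of "map e (sorted_list_of_set B)"]
    by (simp add: strict_sorted_iff)
qed

abbreviation fibre :: "(nat \<Rightarrow> nat) \<Rightarrow> nat \<Rightarrow> nat \<Rightarrow> nat set" where
  "fibre f m i \<equiv> {k. k < m \<and> f k = i}"

lemma srank_eq_card_fibre:
  assumes "k < m"
  shows "srank f k = card {y \<in> fibre f m (f k). y < k}"
  unfolding srank_def using assms by (intro arg_cong[where f = card]) auto

lemma sfib_elem_in_fibre:
  assumes "r < card (fibre f m i)"
  shows "sfib_elem f m i r < m" "f (sfib_elem f m i r) = i"
  using sorted_list_of_set_nth_mem[of "fibre f m i" r] assms by (simp_all add: sfib_elem_def)

lemma srank_sfib_elem: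
  assumes "r < card (fibre f m i)"
  shows "srank f (sfib_elem f m i r) = r"
  using srank_eq_card_fibre[OF sfib_elem_in_fibre(1)[OF assms]] sfib_elem_in_fibre(2)[OF assms]
    card_less_sorted_list_of_set_nth[of "fibre f m i" r] assms
  by (simp add: sfib_elem_def)

lemma sfib_elem_srank:
  assumes "k < m"
  shows "sfib_elem f m (f k) (srank f k) = k"
  using sorted_list_of_set_nth_card_less(2)[of "fibre f m (f k)" k] srank_eq_card_fibre[OF assms] assms
  by (simp add: sfib_elem_def)

lemma fibre_cong:
  assumes "\<And>k. k < m \<Longrightarrow> f k = g k"
  shows "fibre f m i = fibre g m i"
  using assms by auto

lemma sfib_elem_cong:
  assumes "\<And>k. k < m \<Longrightarrow> f k = g k"
  shows "sfib_elem f m i r = sfib_elem g m i r"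
  unfolding sfib_elem_def using fibre_cong[OF assms] by simp

lemma sfib_elem_const:
  assumes "\<And>k. k < m \<Longrightarrow> f k = 0" "r < m"
  shows "sfib_elem f m 0 r = r"
proof -
  have "fibre f m 0 = {0..<m}" using assms by auto
  then show ?thesis using assms by (simp add: sfib_elem_def)
qed

lemma sfib_elem_id:
  assumes "\<And>k. k < m \<Longrightarrow> f k = k" "j < m"
  shows "sfib_elem f m j 0 = j"
proof -
  have "fibre f m j = {j}" using assms by auto
  then show ?thesis by (simp add: sfib_elem_def)
qed

text \<open>The double slice condition for the skeleton of finite sets: \<open>h\<close> is the map between fibres
  prescribed by \<open>card_compat\<close>, and the enumeration of the fibre of \<open>q \<circ> p\<close> over \<open>i\<close> restricts
  to an order isomorphism from the fibre of \<open>h\<close> over \<open>s\<close> onto the fibre of \<open>p\<close> over the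
  \<open>s\<close>-th element of the fibre of \<open>q\<close> over \<open>i\<close>.\<close>

lemma sfib_elem_comp:
  fixes p q h :: "nat \<Rightarrow> nat" and m i :: nat
  defines "N \<equiv> card (fibre (\<lambda>a. q (p a)) m i)"
  assumes p: "\<And>a. a < m \<Longrightarrow> p a < n"
    and s: "s < card (fibre q n i)"
    and r: "r < card (fibre p m (sfib_elem q n i s))"
    and h: "\<And>r'. r' < N \<Longrightarrow> h r' = srank q (p (sfib_elem (\<lambda>a. q (p a)) m i r'))"
  shows "sfib_elem h N s r < N"
    and "sfib_elem (\<lambda>a. q (p a)) m i (sfib_elem h N s r) = sfib_elem p m (sfib_elem q n i s) r"
proof -
  define A where "A = fibre (\<lambda>a. q (p a)) m i"
  define e where "e = sfib_elem (\<lambda>a. q (p a)) m i"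
  define k where "k = sfib_elem q n i s"
  define B where "B = fibre h N s"
  define K where "K = fibre p m k"
  have NA: "N = card A" by (simp add: N_def A_def)
  have e_in_A: "e r' \<in> A" if "r' < N" for r'
    using sfib_elem_in_fibre[where f = "\<lambda>a. q (p a)"] that by (simp add: e_def A_def N_def)
  have e_mono: "strict_mono_on {..<N} e"
    using sorted_list_of_set.strict_sorted_key_list_of_set[of A] NA
    by (auto simp: strict_mono_on_def e_def A_def sfib_elem_def sorted_wrt_iff_nth_less)
  have k: "k < n" "q k = i" using sfib_elem_in_fibre[OF s] by (simp_all add: k_def)
  have B_sub: "B \<subseteq> {..<N}" by (auto simp: B_def)
  have "e ` B = K"
  proof (intro set_eqI iffI)
    fix y assume "y \<in> e ` B"
    then obtain r' where r': "r' < N" "h r' = s" "y = e r'" by (auto simp: B_def)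
    then have y: "y < m" "q (p y) = i" using e_in_A by (auto simp: A_def)
    have "srank q (p y) = s" using h r' by (simp add: e_def)
    then have "p y = k" using sfib_elem_srank[of "p y" n q] p y by (simp add: k_def)
    then show "y \<in> K" using y by (simp add: K_def)
  next
    fix a assume a: "a \<in> K"
    then have "a \<in> A" using k by (auto simp: K_def A_def)
    moreover define j where "j = card {y\<in>A. y < a}"
    ultimately have j: "j < N" "e j = a"
      using sorted_list_of_set_nth_card_less[of A a] NA by (auto simp: e_def A_def sfib_elem_def)
    have "h j = srank q k" using h j a by (simp add: K_def e_def)
    also have "\<dots> = s" using srank_sfib_elem[OF s] by (simp add: k_def)
    finally show "a \<in> e ` B" using j by (auto simp: B_def)
  qed
  moreover have "strict_mono_on B e" using e_mono B_sub by (rule monotone_on_subset)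
  ultimately have sorted_K: "sorted_list_of_set K = map e (sorted_list_of_set B)"
    using sorted_list_of_set_image_strict_mono[of B e] by (simp add: B_def)
  have "r < card B"
    using r arg_cong[OF sorted_K, of length] by (simp add: K_def k_def)
  then have "sfib_elem h N s r \<in> B"
    using sorted_list_of_set_nth_mem[of B r] by (simp add: B_def sfib_elem_def)
  then show "sfib_elem h N s r < N" by (simp add: B_def)
  show "sfib_elem (\<lambda>a. q (p a)) m i (sfib_elem h N s r) = sfib_elem p m (sfib_elem q n i s) r"
    using sorted_K \<open>r < card B\<close>
    by (simp add: e_def sfib_elem_def[of h] sfib_elem_def[of p] K_def k_def B_def)
qed

lemma trivialD:
  assumes "trivial C u"
  shows "u \<in> Obj C" "Card C u = 1"
    and "\<And>f. f \<in> Arr C \<Longrightarrow> Cod C f = u \<Longrightarrow> Fib C f 0 = Dom C f"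
    and "\<And>h g. h \<in> Arr C \<Longrightarrow> g \<in> Arr C \<Longrightarrow> Cod C h = Dom C g \<Longrightarrow> Cod C g = u \<Longrightarrow>
           Fibm C h g 0 = h"
  using assms unfolding trivial_def by blast+

locale operadic_category =
  fixes C :: "('o, 'm) opcat"
  assumes opcat: "opcat C"
begin

lemma arr_dom_cod:
  "f \<in> Arr C \<Longrightarrow> Dom C f \<in> Obj C" "f \<in> Arr C \<Longrightarrow> Cod C f \<in> Obj C"
  using opcat unfolding opcat_def is_category_def by blast+

lemma ide:
  "c \<in> Obj C \<Longrightarrow> Idt C c \<in> Arr C" "c \<in> Obj C \<Longrightarrow> Dom C (Idt C c) = c"
  "c \<in> Obj C \<Longrightarrow> Cod C (Idt C c) = c"
  using opcat unfolding opcat_def is_category_def by blast+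

lemma comp:
  assumes "f \<in> Arr C" "g \<in> Arr C" "Cod C f = Dom C g"
  shows "Comp C g f \<in> Arr C" "Dom C (Comp C g f) = Dom C f" "Cod C (Comp C g f) = Cod C g"
  using opcat assms unfolding opcat_def is_category_def by blast+

lemma comp_ide:
  "f \<in> Arr C \<Longrightarrow> Comp C (Idt C (Cod C f)) f = f" "f \<in> Arr C \<Longrightarrow> Comp C f (Idt C (Dom C f)) = f"
  using opcat unfolding opcat_def is_category_def by blast+

lemma comp_assoc:
  "f \<in> Arr C \<Longrightarrow> g \<in> Arr C \<Longrightarrow> h \<in> Arr C \<Longrightarrow> Cod C f = Dom C g \<Longrightarrow> Cod C g = Dom C h \<Longrightarrow>
   Comp C h (Comp C g f) = Comp C (Comp C h g) f"
  using opcat unfolding opcat_def is_category_def by blast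

lemma Fmap_less:
  "f \<in> Arr C \<Longrightarrow> k < Card C (Dom C f) \<Longrightarrow> Fmap C f k < Card C (Cod C f)"
  using opcat unfolding opcat_def card_functor_def by blast

lemma Fmap_ide: "c \<in> Obj C \<Longrightarrow> k < Card C c \<Longrightarrow> Fmap C (Idt C c) k = k"
  using opcat unfolding opcat_def card_functor_def by blast

lemma Fmap_comp:
  "f \<in> Arr C \<Longrightarrow> g \<in> Arr C \<Longrightarrow> Cod C f = Dom C g \<Longrightarrow> k < Card C (Dom C f) \<Longrightarrow>
   Fmap C (Comp C g f) k = Fmap C g (Fmap C f k)"
  using opcat unfolding opcat_def card_functor_def by blast

lemma Fib_obj: "f \<in> Arr C \<Longrightarrow> i < Card C (Cod C f) \<Longrightarrow> Fib C f i \<in> Obj C"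
  using opcat unfolding opcat_def fibre_functors_def by blast

lemma Fibm:
  assumes "h \<in> Arr C" "g \<in> Arr C" "Cod C h = Dom C g" "i < Card C (Cod C g)"
  shows "Fibm C h g i \<in> Arr C" "Dom C (Fibm C h g i) = Fib C (Comp C g h) i"
    "Cod C (Fibm C h g i) = Fib C g i"
  using opcat assms unfolding opcat_def fibre_functors_def by blast+

lemma Fibm_ide:
  "g \<in> Arr C \<Longrightarrow> i < Card C (Cod C g) \<Longrightarrow> Fibm C (Idt C (Dom C g)) g i = Idt C (Fib C g i)"
  using opcat unfolding opcat_def fibre_functors_def by blast

lemma Fibm_comp:
  "h \<in> Arr C \<Longrightarrow> h' \<in> Arr C \<Longrightarrow> g \<in> Arr C \<Longrightarrow> Cod C h = Dom C h' \<Longrightarrow> Cod C h' = Dom C g \<Longrightarrow>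
   i < Card C (Cod C g) \<Longrightarrow>
   Fibm C (Comp C h' h) g i = Comp C (Fibm C h' g i) (Fibm C h (Comp C g h') i)"
  using opcat unfolding opcat_def fibre_functors_def by blast

lemma Card_Fib:
  "f \<in> Arr C \<Longrightarrow> i < Card C (Cod C f) \<Longrightarrow>
   Card C (Fib C f i) = card (fibre (Fmap C f) (Card C (Dom C f)) i)"
  using opcat unfolding opcat_def card_compat_def by blast

lemma Fmap_Fibm:
  "h \<in> Arr C \<Longrightarrow> g \<in> Arr C \<Longrightarrow> Cod C h = Dom C g \<Longrightarrow> i < Card C (Cod C g) \<Longrightarrow>
   r < Card C (Fib C (Comp C g h) i) \<Longrightarrow>
   Fmap C (Fibm C h g i) r =
     srank (Fmap C g) (Fmap C h (sfib_elem (Fmap C (Comp C g h)) (Card C (Dom C h)) i r))"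
  using opcat unfolding opcat_def card_compat_def by blast

lemma trivial_Fib_ide: "c \<in> Obj C \<Longrightarrow> i < Card C c \<Longrightarrow> trivial C (Fib C (Idt C c) i)"
  using opcat unfolding opcat_def by blast

lemma Fib_double_slice:
  "\<phi> \<in> Arr C \<Longrightarrow> \<psi> \<in> Arr C \<Longrightarrow> Cod C \<phi> = Dom C \<psi> \<Longrightarrow> k < Card C (Cod C \<phi>) \<Longrightarrow>
   Fib C \<phi> k = Fib C (Fibm C \<phi> \<psi> (Fmap C \<psi> k)) (srank (Fmap C \<psi>) k)"
  using opcat unfolding opcat_def double_slice_def by blast

lemma Fibm_double_slice:
  "h \<in> Arr C \<Longrightarrow> \<phi> \<in> Arr C \<Longrightarrow> \<psi> \<in> Arr C \<Longrightarrow> Cod C h = Dom C \<phi> \<Longrightarrow> Cod C \<phi> = Dom C \<psi> \<Longrightarrow>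
   k < Card C (Cod C \<phi>) \<Longrightarrow>
   Fibm C h \<phi> k =
     Fibm C (Fibm C h (Comp C \<psi> \<phi>) (Fmap C \<psi> k)) (Fibm C \<phi> \<psi> (Fmap C \<psi> k)) (srank (Fmap C \<psi>) k)"
  using opcat unfolding opcat_def double_slice_def by blast

end

section \<open>The skew monoidal category of collections\<close>

definition fibre_elem :: "('o, 'm) opcat \<Rightarrow> 'm \<Rightarrow> nat \<Rightarrow> nat \<Rightarrow> nat" where
  "fibre_elem C \<psi> j r = sfib_elem (Fmap C \<psi>) (Card C (Dom C \<psi>)) j r"

definition fibre_family :: "('o, 'm) opcat \<Rightarrow> 'm \<Rightarrow> 'c list \<Rightarrow> nat \<Rightarrow> 'c list" where
  "fibre_family C \<psi> zs j = map (\<lambda>r. zs ! fibre_elem C \<psi> j r) [0..<Card C (Fib C \<psi> j)]"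

lemma length_fibre_family [simp]: "length (fibre_family C \<psi> zs j) = Card C (Fib C \<psi> j)"
  by (simp add: fibre_family_def)

lemma nth_fibre_family [simp]:
  "r < Card C (Fib C \<psi> j) \<Longrightarrow> fibre_family C \<psi> zs j ! r = zs ! fibre_elem C \<psi> j r"
  by (simp add: fibre_family_def)

lemma mem_coll_tensor:
  "(x, \<phi>, ys) \<in> fst (coll_tensor C X Y) \<longleftrightarrow>
     \<phi> \<in> Arr C \<and> x \<in> fst X \<and> snd X x = Cod C \<phi> \<and> length ys = Card C (Cod C \<phi>) \<and>
     (\<forall>i < length ys. ys ! i \<in> fst Y \<and> snd Y (ys ! i) = Fib C \<phi> i)"
  unfolding coll_tensor_def by simp

lemma snd_coll_tensor [simp]: "snd (coll_tensor C X Y) (x, \<phi>, ys) = Dom C \<phi>"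
  unfolding coll_tensor_def by simp

lemma coll_unit_simps [simp]: "fst (coll_unit C) = {u. trivial C u}" "snd (coll_unit C) u = u"
  unfolding coll_unit_def by simp_all

lemma mem_coll_tensor_unit:
  "(u, \<phi>, xs) \<in> fst (coll_tensor C (coll_unit C) X) \<longleftrightarrow>
     \<phi> \<in> Arr C \<and> u = Cod C \<phi> \<and> trivial C u \<and> (\<exists>y. xs = [y] \<and> y \<in> fst X \<and> snd X y = Dom C \<phi>)"
  (is "?lhs \<longleftrightarrow> ?rhs")
proof
  assume ?lhs
  then have \<phi>: "\<phi> \<in> Arr C" "u = Cod C \<phi>" "trivial C u"
    and xs: "length xs = 1" "xs ! 0 \<in> fst X" "snd X (xs ! 0) = Fib C \<phi> 0"
    by (auto simp: mem_coll_tensor dest: trivialD)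
  moreover have "xs = [xs ! 0]" using xs(1) by (cases xs) auto
  ultimately show ?rhs using trivialD(3)[OF \<phi>(3) \<phi>(1)] by metis
next
  assume ?rhs
  then show ?lhs by (auto simp: mem_coll_tensor dest: trivialD)
qed

lemma tensor_hom_apply [simp]: "tensor_hom f g (x, \<phi>, ys) = (f x, \<phi>, map g ys)"
  by (simp add: tensor_hom_def)

lemma coll_lambda_apply [simp]: "coll_lambda (u, \<phi>, xs) = xs ! 0"
  by (simp add: coll_lambda_def)

lemma coll_alpha_apply:
  "coll_alpha C ((x, \<psi>, ys), \<phi>, zs) =
     (x, Comp C \<psi> \<phi>,
      map (\<lambda>j. (ys ! j, Fibm C \<phi> \<psi> j, fibre_family C \<psi> zs j)) [0..<Card C (Cod C \<psi>)])"
  by (simp add: coll_alpha_def fibre_family_def fibre_elem_def)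

lemma coll_tensor_is_coll:
  assumes "opcat C"
  shows "is_coll C (coll_tensor C X Y)"
  using assms
  by (auto simp: is_coll_def coll_tensor_def opcat_def is_category_def)

lemma coll_unit_is_coll: "is_coll C (coll_unit C)"
  by (auto simp: is_coll_def dest: trivialD)

lemma coll_lambda_hom: "coll_hom C (coll_tensor C (coll_unit C) X) X coll_lambda"
  unfolding coll_hom_def
proof
  fix t assume "t \<in> fst (coll_tensor C (coll_unit C) X)"
  then show "coll_lambda t \<in> fst X \<and> snd X (coll_lambda t) = snd (coll_tensor C (coll_unit C) X) t"
    by (cases t) (auto simp: mem_coll_tensor_unit)
qed

lemma coll_tensor_functorial: "coll_tensor_functorial C X X' X'' Y Y' Y'' f f' g g'"
  unfolding coll_tensor_functorial_def
proof (intro conjI impI ballI)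
  assume "coll_hom C X X' f \<and> coll_hom C Y Y' g"
  then show "coll_hom C (coll_tensor C X Y) (coll_tensor C X' Y') (tensor_hom f g)"
    by (auto simp: coll_hom_def tensor_hom_def coll_tensor_def)
qed (auto simp: tensor_hom_def)

context operadic_category
begin

lemma fibre_elem:
  assumes "\<psi> \<in> Arr C" "j < Card C (Cod C \<psi>)" "r < Card C (Fib C \<psi> j)"
  shows "fibre_elem C \<psi> j r < Card C (Dom C \<psi>)" "Fmap C \<psi> (fibre_elem C \<psi> j r) = j"
    "srank (Fmap C \<psi>) (fibre_elem C \<psi> j r) = r"
  using assms Card_Fib[OF assms(1,2)]
  by (simp_all add: fibre_elem_def sfib_elem_in_fibre srank_sfib_elem)

lemma Fib_fibre_elem:
  assumes "\<phi> \<in> Arr C" "\<psi> \<in> Arr C" "Cod C \<phi> = Dom C \<psi>"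
    and "j < Card C (Cod C \<psi>)" "r < Card C (Fib C \<psi> j)"
  shows "Fib C \<phi> (fibre_elem C \<psi> j r) = Fib C (Fibm C \<phi> \<psi> j) r"
  using Fib_double_slice[OF assms(1-3)] fibre_elem[OF assms(2,4,5)] assms(3) by simp

lemma coll_alpha_hom:
  "coll_hom C (coll_tensor C (coll_tensor C X Y) Z) (coll_tensor C X (coll_tensor C Y Z)) (coll_alpha C)"
  unfolding coll_hom_def
proof
  fix t assume t: "t \<in> fst (coll_tensor C (coll_tensor C X Y) Z)"
  then obtain x \<psi> ys \<phi> zs where t_eq: "t = ((x, \<psi>, ys), \<phi>, zs)"
    and \<phi>: "\<phi> \<in> Arr C" and \<psi>: "\<psi> \<in> Arr C" "Dom C \<psi> = Cod C \<phi>"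
    and x: "x \<in> fst X" "snd X x = Cod C \<psi>"
    and ys: "length ys = Card C (Cod C \<psi>)" "\<forall>j<length ys. ys ! j \<in> fst Y \<and> snd Y (ys ! j) = Fib C \<psi> j"
    and zs: "length zs = Card C (Cod C \<phi>)" "\<forall>k<length zs. zs ! k \<in> fst Z \<and> snd Z (zs ! k) = Fib C \<phi> k"
    by (cases t) (auto simp: mem_coll_tensor)
  have component: "(ys ! j, Fibm C \<phi> \<psi> j, fibre_family C \<psi> zs j) \<in> fst (coll_tensor C Y Z)"
    if j: "j < Card C (Cod C \<psi>)" for j
  proof -
    have "zs ! fibre_elem C \<psi> j r \<in> fst Z \<and> snd Z (zs ! fibre_elem C \<psi> j r) = Fib C (Fibm C \<phi> \<psi> j) r"
      if "r < Card C (Fib C \<psi> j)" for r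
      using zs fibre_elem(1)[OF \<psi>(1) j that] Fib_fibre_elem[OF \<phi> \<psi>(1) \<psi>(2)[symmetric] j that] \<psi>(2)
      by simp
    then show ?thesis
      using Fibm[OF \<phi> \<psi>(1) \<psi>(2)[symmetric] j] ys j by (simp add: mem_coll_tensor)
  qed
  have "Dom C (Fibm C \<phi> \<psi> j) = Fib C (Comp C \<psi> \<phi>) j" if "j < Card C (Cod C \<psi>)" for j
    using Fibm(2)[OF \<phi> \<psi>(1) \<psi>(2)[symmetric] that] .
  then show "coll_alpha C t \<in> fst (coll_tensor C X (coll_tensor C Y Z)) \<and>
      snd (coll_tensor C X (coll_tensor C Y Z)) (coll_alpha C t) = snd (coll_tensor C (coll_tensor C X Y) Z) t"
    using component comp[OF \<phi> \<psi>(1) \<psi>(2)[symmetric]] x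
    by (simp add: t_eq coll_alpha_apply mem_coll_tensor)
qed

lemma coll_rho_hom:
  assumes X: "is_coll C X"
  shows "coll_hom C X (coll_tensor C X (coll_unit C)) (coll_rho C X)"
  unfolding coll_hom_def
proof
  fix x assume x: "x \<in> fst X"
  then have c: "snd X x \<in> Obj C" using X by (auto simp: is_coll_def)
  then show "coll_rho C X x \<in> fst (coll_tensor C X (coll_unit C)) \<and>
      snd (coll_tensor C X (coll_unit C)) (coll_rho C X x) = snd X x"
    using ide[OF c] trivial_Fib_ide[OF c] x by (simp add: coll_rho_def mem_coll_tensor)
qed

lemma fibre_family_trivial:
  assumes "\<psi> \<in> Arr C" "trivial C (Cod C \<psi>)" "length zs = Card C (Dom C \<psi>)"
  shows "fibre_family C \<psi> zs 0 = zs"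
proof -
  have "Fmap C \<psi> k = 0" if "k < Card C (Dom C \<psi>)" for k
    using Fmap_less[OF assms(1) that] trivialD(2)[OF assms(2)] by simp
  then have "fibre_elem C \<psi> 0 r = r" if "r < Card C (Dom C \<psi>)" for r
    using sfib_elem_const that by (simp add: fibre_elem_def)
  then show ?thesis
    using assms trivialD(3)[OF assms(2,1)] by (simp add: list_eq_iff_nth_eq)
qed

lemma fibre_family_ide:
  assumes "c \<in> Obj C" "j < Card C c" "length zs = Card C c"
  shows "fibre_family C (Idt C c) zs j = [zs ! j]"
proof -
  have "Card C (Fib C (Idt C c) j) = 1"
    using trivialD(2)[OF trivial_Fib_ide[OF assms(1,2)]] .
  moreover have "fibre_elem C (Idt C c) j 0 = j"
    using sfib_elem_id[OF Fmap_ide[OF assms(1)] assms(2)] ide[OF assms(1)] by (simp add: fibre_elem_def)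
  ultimately show ?thesis by (simp add: list_eq_iff_nth_eq)
qed

lemma fibre_family_Fibm:
  assumes \<psi>: "\<psi> \<in> Arr C" and \<chi>: "\<chi> \<in> Arr C" "Cod C \<psi> = Dom C \<chi>"
    and i: "i < Card C (Cod C \<chi>)" and s: "s < Card C (Fib C \<chi> i)"
  shows "fibre_family C (Fibm C \<psi> \<chi> i) (fibre_family C (Comp C \<chi> \<psi>) zs i) s =
         fibre_family C \<psi> zs (fibre_elem C \<chi> i s)"
proof -
  define k where "k = fibre_elem C \<chi> i s"
  define \<psi>\<^sub>i where "\<psi>\<^sub>i = Fibm C \<psi> \<chi> i"
  have k: "k < Card C (Cod C \<psi>)" "Fmap C \<chi> k = i" "srank (Fmap C \<chi>) k = s"
    using fibre_elem[OF \<chi>(1) i s] \<chi>(2) by (simp_all add: k_def)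
  have \<chi>\<psi>: "Comp C \<chi> \<psi> \<in> Arr C" "Dom C (Comp C \<chi> \<psi>) = Dom C \<psi>" "Cod C (Comp C \<chi> \<psi>) = Cod C \<chi>"
    using comp[OF \<psi> \<chi>] by simp_all
  have \<psi>\<^sub>i: "Dom C \<psi>\<^sub>i = Fib C (Comp C \<chi> \<psi>) i"
    using Fibm[OF \<psi> \<chi> i] by (simp add: \<psi>\<^sub>i_def)
  have Fib_eq: "Fib C \<psi>\<^sub>i s = Fib C \<psi> k"
    using Fib_fibre_elem[OF \<psi> \<chi> i s] by (simp add: \<psi>\<^sub>i_def k_def)
  have Fmap_\<chi>\<psi>: "Fmap C (Comp C \<chi> \<psi>) a = Fmap C \<chi> (Fmap C \<psi> a)" if "a < Card C (Dom C \<psi>)" for a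
    using Fmap_comp[OF \<psi> \<chi> that] .
  have "fibre_elem C (Comp C \<chi> \<psi>) i (fibre_elem C \<psi>\<^sub>i s r) = fibre_elem C \<psi> k r \<and>
        fibre_elem C \<psi>\<^sub>i s r < Card C (Fib C (Comp C \<chi> \<psi>) i)"
    if r: "r < Card C (Fib C \<psi> k)" for r
  proof -
    let ?m = "Card C (Dom C \<psi>)" and ?n = "Card C (Cod C \<psi>)"
    have N: "Card C (Fib C (Comp C \<chi> \<psi>) i) = card (fibre (\<lambda>a. Fmap C \<chi> (Fmap C \<psi> a)) ?m i)"
      using Card_Fib[OF \<chi>\<psi>(1)] i \<chi>\<psi> fibre_cong[OF Fmap_\<chi>\<psi>] by simp
    have "Fmap C \<psi>\<^sub>i r' = srank (Fmap C \<chi>) (Fmap C \<psi> (sfib_elem (\<lambda>a. Fmap C \<chi> (Fmap C \<psi> a)) ?m i r'))"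
      if "r' < card (fibre (\<lambda>a. Fmap C \<chi> (Fmap C \<psi> a)) ?m i)" for r'
      using Fmap_Fibm[OF \<psi> \<chi> i] that N sfib_elem_cong[OF Fmap_\<chi>\<psi>] by (simp add: \<psi>\<^sub>i_def)
    moreover have "s < card (fibre (Fmap C \<chi>) ?n i)" "k = sfib_elem (Fmap C \<chi>) ?n i s"
      using Card_Fib[OF \<chi>(1) i] s \<chi>(2) by (simp_all add: k_def fibre_elem_def)
    moreover have "r < card (fibre (Fmap C \<psi>) ?m k)" using Card_Fib[OF \<psi> k(1)] r by simp
    ultimately show ?thesis
      using sfib_elem_comp[where p = "Fmap C \<psi>" and q = "Fmap C \<chi>" and h = "Fmap C \<psi>\<^sub>i"
          and m = ?m and n = ?n]
        Fmap_less[OF \<psi>] N \<psi>\<^sub>i sfib_elem_cong[OF Fmap_\<chi>\<psi>]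
      by (simp add: fibre_elem_def \<chi>\<psi>(2))
  qed
  then show ?thesis
    using Fib_eq by (simp add: fibre_family_def \<psi>\<^sub>i_def[symmetric] k_def[symmetric])
qed

lemma coll_lambda_rho_unit:
  assumes "trivial C u"
  shows "coll_lambda (coll_rho C (coll_unit C) u) = u"
proof -
  have u: "u \<in> Obj C" "Card C u = 1" using trivialD[OF assms] by simp_all
  then have "Fib C (Idt C u) 0 = u" using trivialD(3)[OF assms] ide[OF u(1)] by simp
  then show ?thesis using u by (simp add: coll_rho_def)
qed

lemma coll_lambda_alpha:
  assumes "t \<in> fst (coll_tensor C (coll_tensor C (coll_unit C) X) Y)"
  shows "coll_lambda (coll_alpha C t) = tensor_hom coll_lambda id t"
proof -
  obtain u \<psi> xs \<phi> ys where t: "t = ((u, \<psi>, xs), \<phi>, ys)"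
    and \<phi>: "\<phi> \<in> Arr C" and \<psi>: "\<psi> \<in> Arr C" "Dom C \<psi> = Cod C \<phi>" "trivial C (Cod C \<psi>)"
    and ys: "length ys = Card C (Cod C \<phi>)"
    using assms by (cases t) (auto simp: mem_coll_tensor)
  have "Fibm C \<phi> \<psi> 0 = \<phi>" using trivialD(4)[OF \<psi>(3) \<phi> \<psi>(1)] \<psi>(2) by simp
  moreover have "fibre_family C \<psi> ys 0 = ys" using fibre_family_trivial[OF \<psi>(1,3)] \<psi>(2) ys by simp
  ultimately show ?thesis using trivialD(2)[OF \<psi>(3)] by (simp add: t coll_alpha_apply)
qed

lemma coll_alpha_rho:
  assumes "t \<in> fst (coll_tensor C X Y)"
  shows "coll_alpha C (coll_rho C (coll_tensor C X Y) t) = tensor_hom id (coll_rho C Y) t"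
proof -
  obtain x \<phi> ys where t: "t = (x, \<phi>, ys)" and \<phi>: "\<phi> \<in> Arr C"
    and ys: "length ys = Card C (Cod C \<phi>)" "\<forall>j<length ys. snd Y (ys ! j) = Fib C \<phi> j"
    using assms by (cases t) (auto simp: mem_coll_tensor)
  define d where "d = Dom C \<phi>"
  have d: "d \<in> Obj C" "Idt C d \<in> Arr C" "Cod C (Idt C d) = Dom C \<phi>"
    using arr_dom_cod(1)[OF \<phi>] ide by (simp_all add: d_def)
  have "fibre_family C \<phi> (map (Fib C (Idt C d)) [0..<Card C d]) j =
        map (Fib C (Idt C (Fib C \<phi> j))) [0..<Card C (Fib C \<phi> j)]"
    if j: "j < Card C (Cod C \<phi>)" for j
    using Fib_fibre_elem[OF d(2) \<phi> d(3) j] fibre_elem(1)[OF \<phi> j] Fibm_ide[OF \<phi> j]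
    by (simp add: list_eq_iff_nth_eq d_def)
  then show ?thesis
    using ys Fibm_ide[OF \<phi>] comp_ide(2)[OF \<phi>]
    by (simp add: t d_def coll_alpha_apply coll_rho_def list_eq_iff_nth_eq)
qed

lemma coll_lambda_alpha_rho:
  assumes X: "is_coll C X" and "t \<in> fst (coll_tensor C X Y)"
  shows "tensor_hom id coll_lambda (coll_alpha C (tensor_hom (coll_rho C X) id t)) = t"
proof -
  obtain x \<phi> ys where t: "t = (x, \<phi>, ys)" and \<phi>: "\<phi> \<in> Arr C"
    and x: "snd X x = Cod C \<phi>" and ys: "length ys = Card C (Cod C \<phi>)"
    using assms(2) by (cases t) (auto simp: mem_coll_tensor)
  have c: "Cod C \<phi> \<in> Obj C" using arr_dom_cod(2)[OF \<phi>] .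
  then show ?thesis
    using fibre_family_ide[OF c _ ys] ide[OF c] comp_ide(1)[OF \<phi>] ys x
    by (simp add: t coll_alpha_apply coll_rho_def list_eq_iff_nth_eq)
qed

lemma coll_alpha_pentagon:
  assumes "t \<in> fst (coll_tensor C (coll_tensor C (coll_tensor C W X) Y) Z)"
  shows "coll_alpha C (coll_alpha C t) =
         tensor_hom id (coll_alpha C) (coll_alpha C (tensor_hom (coll_alpha C) id t))"
proof -
  obtain w \<chi> xs \<psi> ys \<phi> zs where t: "t = (((w, \<chi>, xs), \<psi>, ys), \<phi>, zs)"
    and \<phi>: "\<phi> \<in> Arr C" and \<psi>: "\<psi> \<in> Arr C" "Cod C \<phi> = Dom C \<psi>"
    and \<chi>: "\<chi> \<in> Arr C" "Cod C \<psi> = Dom C \<chi>"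
    using assms by (cases t) (auto simp: mem_coll_tensor)
  have \<chi>\<psi>: "Comp C \<chi> \<psi> \<in> Arr C" "Cod C (Comp C \<chi> \<psi>) = Cod C \<chi>" "Dom C (Comp C \<chi> \<psi>) = Dom C \<psi>"
    using comp[OF \<psi>(1) \<chi>] by simp_all
  define L where "L = map (\<lambda>j. (ys ! j, Fibm C \<phi> \<psi> j, fibre_family C \<psi> zs j)) [0..<Card C (Cod C \<psi>)]"
  have "L ! fibre_elem C \<chi> i s =
          (fibre_family C \<chi> ys i ! s, Fibm C (Fibm C \<phi> (Comp C \<chi> \<psi>) i) (Fibm C \<psi> \<chi> i) s,
           fibre_family C (Fibm C \<psi> \<chi> i) (fibre_family C (Comp C \<chi> \<psi>) zs i) s)"
    if i: "i < Card C (Cod C \<chi>)" and s: "s < Card C (Fib C \<chi> i)" for i s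
    using fibre_elem[OF \<chi>(1) i s] \<chi>(2) s
      Fibm_double_slice[OF \<phi> \<psi>(1) \<chi>(1) \<psi>(2) \<chi>(2), of "fibre_elem C \<chi> i s"]
    by (simp add: L_def fibre_family_Fibm[OF \<psi>(1) \<chi> i s])
  then have "fibre_family C \<chi> L i =
      map (\<lambda>s. (fibre_family C \<chi> ys i ! s, Fibm C (Fibm C \<phi> (Comp C \<chi> \<psi>) i) (Fibm C \<psi> \<chi> i) s,
                 fibre_family C (Fibm C \<psi> \<chi> i) (fibre_family C (Comp C \<chi> \<psi>) zs i) s))
          [0..<Card C (Fib C \<chi> i)]"
    if "i < Card C (Cod C \<chi>)" for i
    unfolding fibre_family_def[of C \<chi> L] using that by (intro map_cong) simp_all
  then show ?thesis
    using comp_assoc[OF \<phi> \<psi>(1) \<chi>(1) \<psi>(2) \<chi>(2)] comp[OF \<phi> \<psi>] Fibm(3)[OF \<psi>(1) \<chi>] \<chi>\<psi>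
      Fibm_comp[OF \<phi> \<psi>(1) \<chi>(1) \<psi>(2) \<chi>(2)]
    by (simp add: t coll_alpha_apply L_def[symmetric])
qed

lemma coll_skew_axioms:
  assumes "is_coll C X"
  shows "coll_skew_axioms C W X Y Z"
  unfolding coll_skew_axioms_def
  by (simp add: coll_tensor_is_coll[OF opcat] coll_unit_is_coll coll_alpha_hom coll_lambda_hom
      coll_rho_hom[OF assms] coll_lambda_rho_unit coll_lambda_alpha coll_alpha_rho
      coll_lambda_alpha_rho[OF assms] coll_alpha_pentagon)

lemma coll_skew_natural: "coll_skew_natural C X X' Y Y' Z Z' f g h"
  unfolding coll_skew_natural_def
proof (intro impI conjI ballI)
  fix t assume "t \<in> fst (coll_tensor C (coll_tensor C X Y) Z)"
  then obtain x \<psi> ys \<phi> zs where t: "t = ((x, \<psi>, ys), \<phi>, zs)"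
    and \<psi>: "\<psi> \<in> Arr C" "Dom C \<psi> = Cod C \<phi>"
    and ys: "length ys = Card C (Cod C \<psi>)" and zs: "length zs = Card C (Cod C \<phi>)"
    by (cases t) (auto simp: mem_coll_tensor)
  have "fibre_family C \<psi> (map h zs) j = map h (fibre_family C \<psi> zs j)" if "j < Card C (Cod C \<psi>)" for j
    using fibre_elem(1)[OF \<psi>(1) that] \<psi>(2) zs by (simp add: list_eq_iff_nth_eq)
  then show "coll_alpha C (tensor_hom (tensor_hom f g) h t) = tensor_hom f (tensor_hom g h) (coll_alpha C t)"
    using ys by (simp add: t coll_alpha_apply)
next
  fix t assume "t \<in> fst (coll_tensor C (coll_unit C) X)"
  then show "coll_lambda (tensor_hom id f t) = f (coll_lambda t)"
    by (cases t) (auto simp: mem_coll_tensor_unit)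
next
  fix x assume "coll_hom C X X' f \<and> coll_hom C Y Y' g \<and> coll_hom C Z Z' h" "x \<in> fst X"
  then show "coll_rho C X' (f x) = tensor_hom f id (coll_rho C X x)"
    by (simp add: coll_hom_def coll_rho_def)
qed

end

locale strict_operadic_functor =
  C: operadic_category C + D: operadic_category D
  for C :: "('o, 'm) opcat" and D :: "('o2, 'm2) opcat" +
  fixes F :: "('o \<Rightarrow> 'o2) \<times> ('m \<Rightarrow> 'm2)"
  assumes strict: "strict_opfunctor C D F"
begin

lemma preserves_obj: "c \<in> Obj C \<Longrightarrow> fst F c \<in> Obj D"
  and preserves_arr: "f \<in> Arr C \<Longrightarrow> snd F f \<in> Arr D"
  and preserves_dom: "f \<in> Arr C \<Longrightarrow> Dom D (snd F f) = fst F (Dom C f)"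
  and preserves_cod: "f \<in> Arr C \<Longrightarrow> Cod D (snd F f) = fst F (Cod C f)"
  and preserves_ide: "c \<in> Obj C \<Longrightarrow> snd F (Idt C c) = Idt D (fst F c)"
  and preserves_comp: "f \<in> Arr C \<Longrightarrow> g \<in> Arr C \<Longrightarrow> Cod C f = Dom C g \<Longrightarrow>
         snd F (Comp C g f) = Comp D (snd F g) (snd F f)"
  and preserves_Card: "c \<in> Obj C \<Longrightarrow> Card D (fst F c) = Card C c"
  and preserves_Fmap: "f \<in> Arr C \<Longrightarrow> k < Card C (Dom C f) \<Longrightarrow> Fmap D (snd F f) k = Fmap C f k"
  and preserves_Fib: "f \<in> Arr C \<Longrightarrow> i < Card C (Cod C f) \<Longrightarrow> Fib D (snd F f) i = fst F (Fib C f i)"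
  and preserves_Fibm: "h \<in> Arr C \<Longrightarrow> g \<in> Arr C \<Longrightarrow> Cod C h = Dom C g \<Longrightarrow> i < Card C (Cod C g) \<Longrightarrow>
         Fibm D (snd F h) (snd F g) i = snd F (Fibm C h g i)"
  using strict unfolding strict_opfunctor_def by blast+

lemma preserves_trivial:
  assumes "trivial C u"
  shows "trivial D (fst F u)"
proof -
  have u: "u \<in> Obj C" "Card C u = 1" using trivialD[OF assms] by simp_all
  then have "Fib C (Idt C u) 0 = u" using trivialD(3)[OF assms] C.ide[OF u(1)] by simp
  then have "fst F u = Fib D (Idt D (fst F u)) 0"
    using preserves_Fib[OF C.ide(1)[OF u(1)]] preserves_ide[OF u(1)] C.ide[OF u(1)] u(2) by simp
  then show ?thesis
    using D.trivial_Fib_ide[OF preserves_obj[OF u(1)]] preserves_Card[OF u(1)] u(2) by simp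
qed

lemma preserves_fibre_family:
  assumes "\<psi> \<in> Arr C" "j < Card C (Cod C \<psi>)"
  shows "fibre_family D (snd F \<psi>) zs j = fibre_family C \<psi> zs j"
proof -
  have "fibre_elem D (snd F \<psi>) j r = fibre_elem C \<psi> j r" for r
    using sfib_elem_cong[of "Card C (Dom C \<psi>)" "Fmap D (snd F \<psi>)" "Fmap C \<psi>"] preserves_Fmap[OF assms(1)]
      preserves_dom[OF assms(1)] preserves_Card[OF C.arr_dom_cod(1)[OF assms(1)]]
    by (simp add: fibre_elem_def)
  moreover have "Card D (Fib D (snd F \<psi>) j) = Card C (Fib C \<psi> j)"
    using preserves_Fib[OF assms] preserves_Card[OF C.Fib_obj[OF assms]] by simp
  ultimately show ?thesis by (simp add: fibre_family_def)
qed

lemma coll_opmonoidal: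
  assumes X: "is_coll C X"
  shows "coll_opmonoidal C D F X X' Y Y' Z f g"
  unfolding coll_opmonoidal_def
proof (intro conjI impI ballI)
  show "is_coll D (coll_push F X)"
    using X preserves_obj by (auto simp: is_coll_def coll_push_def)
next
  show "coll_hom D (coll_push F (coll_tensor C X Y)) (coll_tensor D (coll_push F X) (coll_push F Y))
          (coll_F2 F)"
    unfolding coll_hom_def
  proof
    fix t assume "t \<in> fst (coll_push F (coll_tensor C X Y))"
    then obtain x \<phi> ys where t: "t = (x, \<phi>, ys)" and "(x, \<phi>, ys) \<in> fst (coll_tensor C X Y)"
      by (cases t) (simp add: coll_push_def)
    then show "coll_F2 F t \<in> fst (coll_tensor D (coll_push F X) (coll_push F Y)) \<and>
        snd (coll_tensor D (coll_push F X) (coll_push F Y)) (coll_F2 F t) =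
        snd (coll_push F (coll_tensor C X Y)) t"
      using preserves_arr preserves_dom preserves_cod preserves_Fib preserves_Card C.arr_dom_cod
      by (auto simp: t mem_coll_tensor coll_F2_def coll_push_def)
  qed
next
  show "coll_hom D (coll_push F (coll_unit C)) (coll_unit D) (coll_F0 F)"
    using preserves_trivial by (simp add: coll_hom_def coll_push_def coll_F0_def)
next
  fix t assume "t \<in> fst (coll_tensor C (coll_tensor C X Y) Z)"
  then obtain x \<psi> ys \<phi> zs where t: "t = ((x, \<psi>, ys), \<phi>, zs)"
    and \<phi>: "\<phi> \<in> Arr C" and \<psi>: "\<psi> \<in> Arr C" "Cod C \<phi> = Dom C \<psi>"
    by (cases t) (auto simp: mem_coll_tensor)
  show "coll_alpha D (tensor_hom (coll_F2 F) id (coll_F2 F t)) =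
        tensor_hom id (coll_F2 F) (coll_F2 F (coll_alpha C t))"
    using preserves_comp[OF \<phi> \<psi>] preserves_cod[OF \<psi>(1)] preserves_Card[OF C.arr_dom_cod(2)[OF \<psi>(1)]]
      preserves_Fibm[OF \<phi> \<psi>] preserves_fibre_family[OF \<psi>(1)]
    by (auto simp: t coll_alpha_apply coll_F2_def)
next
  fix x assume "x \<in> fst X"
  then have c: "snd X x \<in> Obj C" using X by (auto simp: is_coll_def)
  show "tensor_hom id (coll_F0 F) (coll_F2 F (coll_rho C X x)) = coll_rho D (coll_push F X) x"
    using preserves_Fib[OF C.ide(1)[OF c]] C.ide[OF c] preserves_ide[OF c] preserves_Card[OF c]
    by (simp add: coll_rho_def coll_F2_def coll_F0_def coll_push_def)
qed (auto simp: coll_hom_def coll_push_def coll_F2_def coll_F0_def tensor_hom_def split: prod.splits)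

end

section \<open>Genuine operadic categories\<close>

definition unique_arrows_to_trivial :: "('o, 'm) opcat \<Rightarrow> bool" where
  "unique_arrows_to_trivial C \<longleftrightarrow>
     (\<forall>c\<in>Obj C. \<exists>!\<phi>. \<phi> \<in> Arr C \<and> Dom C \<phi> = c \<and> trivial C (Cod C \<phi>))"

definition arrow_to_trivial :: "('o, 'm) opcat \<Rightarrow> 'o \<Rightarrow> 'm" where
  "arrow_to_trivial C c = (THE \<phi>. \<phi> \<in> Arr C \<and> Dom C \<phi> = c \<and> trivial C (Cod C \<phi>))"

lemma unique_arrows_to_trivial_if_genuine:
  assumes "genuine C"
  shows "unique_arrows_to_trivial C"
  unfolding unique_arrows_to_trivial_def
proof
  fix c assume c: "c \<in> Obj C"
  obtain u where u: "trivial C u" "connected C c u" "\<And>u'. trivial C u' \<and> connected C c u' \<Longrightarrow> u' = u"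
    using assms c unfolding genuine_def by metis
  obtain f where f: "f \<in> Arr C" "Dom C f = c" "Cod C f = u"
    "\<And>f'. f' \<in> Arr C \<and> Dom C f' = c \<and> Cod C f' = u \<Longrightarrow> f' = f"
    using assms u(1,2) unfolding genuine_def by metis
  have "\<psi> = f" if \<psi>: "\<psi> \<in> Arr C" "Dom C \<psi> = c" "trivial C (Cod C \<psi>)" for \<psi>
  proof -
    have "(c, Cod C \<psi>) \<in> arr_rel C" using \<psi> unfolding arr_rel_def by auto
    then have "connected C c (Cod C \<psi>)" using c trivialD(1)[OF \<psi>(3)] unfolding connected_def by auto
    then show ?thesis using u(3) \<psi> f(4) by blast
  qed
  then show "\<exists>!\<phi>. \<phi> \<in> Arr C \<and> Dom C \<phi> = c \<and> trivial C (Cod C \<phi>)" using f u(1) by blast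
qed

lemma unique_arrows_to_trivial_if_lambda_iso:
  assumes "\<forall>X::('a, 'o) coll. is_coll C X \<longrightarrow> coll_iso C (coll_tensor C (coll_unit C) X) X coll_lambda"
  shows "unique_arrows_to_trivial (C :: ('o, 'm) opcat)"
  unfolding unique_arrows_to_trivial_def
proof
  fix c assume c: "c \<in> Obj C"
  define x :: 'a where "x = undefined"
  define X :: "('a, 'o) coll" where "X = ({x}, \<lambda>_. c)"
  have "is_coll C X" using c by (simp add: X_def is_coll_def)
  then obtain g where g: "coll_hom C X (coll_tensor C (coll_unit C) X) g"
    "\<forall>t\<in>fst (coll_tensor C (coll_unit C) X). g (coll_lambda t) = t"
    using assms unfolding coll_iso_def by blast
  obtain u \<phi> xs where gx: "g x = (u, \<phi>, xs)" by (cases "g x")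
  have "g x \<in> fst (coll_tensor C (coll_unit C) X)" "snd (coll_tensor C (coll_unit C) X) (g x) = c"
    using g(1) by (auto simp: coll_hom_def X_def)
  then have "\<phi> \<in> Arr C \<and> Dom C \<phi> = c \<and> trivial C (Cod C \<phi>)"
    by (auto simp: gx mem_coll_tensor_unit)
  moreover have "\<psi> = \<phi>" if "\<psi> \<in> Arr C \<and> Dom C \<psi> = c \<and> trivial C (Cod C \<psi>)" for \<psi>
  proof -
    have "(Cod C \<psi>, \<psi>, [x]) \<in> fst (coll_tensor C (coll_unit C) X)"
      using that by (simp add: mem_coll_tensor_unit X_def)
    then have "g x = (Cod C \<psi>, \<psi>, [x])" using g(2) by force
    then show ?thesis using gx by simp
  qed
  ultimately show "\<exists>!\<phi>. \<phi> \<in> Arr C \<and> Dom C \<phi> = c \<and> trivial C (Cod C \<phi>)" by blast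
qed

context operadic_category
begin

context
  assumes unique: "unique_arrows_to_trivial C"
begin

lemma arrow_to_trivial:
  assumes "c \<in> Obj C"
  shows "arrow_to_trivial C c \<in> Arr C" "Dom C (arrow_to_trivial C c) = c"
    "trivial C (Cod C (arrow_to_trivial C c))"
  using theI'[of "\<lambda>\<phi>. \<phi> \<in> Arr C \<and> Dom C \<phi> = c \<and> trivial C (Cod C \<phi>)"] unique assms
  by (simp_all add: arrow_to_trivial_def unique_arrows_to_trivial_def)

lemma arrow_to_trivial_eqI:
  assumes "\<phi> \<in> Arr C" "Dom C \<phi> = c" "trivial C (Cod C \<phi>)"
  shows "arrow_to_trivial C c = \<phi>"
  unfolding arrow_to_trivial_def
  using the1_equality[of "\<lambda>\<phi>. \<phi> \<in> Arr C \<and> Dom C \<phi> = c \<and> trivial C (Cod C \<phi>)"] unique assms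
    arr_dom_cod(1)[OF assms(1)]
  by (auto simp: unique_arrows_to_trivial_def)

lemma arrow_to_trivial_of_trivial:
  assumes "trivial C u"
  shows "arrow_to_trivial C u = Idt C u"
  using ide[OF trivialD(1)[OF assms]] assms by (intro arrow_to_trivial_eqI) simp_all

lemma Cod_arrow_to_trivial_eq:
  assumes "g \<in> Arr C"
  shows "Cod C (arrow_to_trivial C (Dom C g)) = Cod C (arrow_to_trivial C (Cod C g))"
proof -
  let ?\<tau> = "arrow_to_trivial C (Cod C g)"
  have \<tau>: "?\<tau> \<in> Arr C" "Dom C ?\<tau> = Cod C g" "trivial C (Cod C ?\<tau>)"
    using arrow_to_trivial[OF arr_dom_cod(2)[OF assms]] by simp_all
  then have "arrow_to_trivial C (Dom C g) = Comp C ?\<tau> g"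
    using comp[OF assms \<tau>(1)] by (intro arrow_to_trivial_eqI) simp_all
  then show ?thesis using comp(3)[OF assms \<tau>(1)] \<tau>(2) by simp
qed

lemma Cod_arrow_to_trivial_connected:
  assumes "connected C a b"
  shows "Cod C (arrow_to_trivial C a) = Cod C (arrow_to_trivial C b)"
proof -
  have "(a, b) \<in> (arr_rel C \<union> (arr_rel C)\<inverse>)\<^sup>*" using assms by (simp add: connected_def)
  then show ?thesis
    by (induction rule: rtrancl_induct) (auto simp: arr_rel_def Cod_arrow_to_trivial_eq)
qed

lemma genuine_if_unique_arrows_to_trivial: "genuine C"
proof -
  have trivial_eq: "u = Cod C (arrow_to_trivial C c)" if "trivial C u" "connected C c u" for u c
    using Cod_arrow_to_trivial_connected[OF that(2)] arrow_to_trivial_of_trivial[OF that(1)]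
      ide[OF trivialD(1)[OF that(1)]] by simp
  have connected: "connected C c (Cod C (arrow_to_trivial C c))" if "c \<in> Obj C" for c
    using arrow_to_trivial[OF that] that arr_dom_cod(2) by (force simp: connected_def arr_rel_def)
  have "\<exists>!u. trivial C u \<and> connected C c u" if "c \<in> Obj C" for c
    using trivial_eq connected[OF that] arrow_to_trivial(3)[OF that] by blast
  moreover have "\<exists>!f. f \<in> Arr C \<and> Dom C f = c \<and> Cod C f = u"
    if "trivial C u" "connected C c u" for u c
  proof -
    have "c \<in> Obj C" using that(2) by (simp add: connected_def)
    then show ?thesis
      using arrow_to_trivial trivial_eq[OF that] arrow_to_trivial_eqI that(1) by metis
  qed
  ultimately show ?thesis unfolding genuine_def by blast
qed

lemma coll_lambda_iso_if_unique_arrows_to_trivial: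
  assumes X: "is_coll C X"
  shows "coll_iso C (coll_tensor C (coll_unit C) X) X coll_lambda"
proof -
  define g where "g = (\<lambda>y. (Cod C (arrow_to_trivial C (snd X y)), arrow_to_trivial C (snd X y), [y]))"
  have "coll_hom C X (coll_tensor C (coll_unit C) X) g"
    using X arrow_to_trivial by (auto simp: coll_hom_def is_coll_def g_def mem_coll_tensor_unit)
  moreover have "g (coll_lambda t) = t" if "t \<in> fst (coll_tensor C (coll_unit C) X)" for t
    using that arrow_to_trivial_eqI by (cases t) (auto simp: g_def mem_coll_tensor_unit)
  moreover have "coll_lambda (g y) = y" for y by (simp add: g_def)
  ultimately show ?thesis unfolding coll_iso_def using coll_lambda_hom by blast
qed

end

lemma genuine_iff_coll_lambda_iso:
  "genuine C \<longleftrightarrow>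
     (\<forall>X::('a, 'o) coll. is_coll C X \<longrightarrow> coll_iso C (coll_tensor C (coll_unit C) X) X coll_lambda)"
  using unique_arrows_to_trivial_if_genuine unique_arrows_to_trivial_if_lambda_iso
    genuine_if_unique_arrows_to_trivial coll_lambda_iso_if_unique_arrows_to_trivial
  by blast

end

theorem theorem5p1:
  shows
  "\<comment> \<open>Coll_C(Set) is a skew monoidal category, for every operadic category C\<close>
   (\<forall>(C::('o, 'm) opcat) (W::('w, 'o) coll) (X::('a, 'o) coll) (Y::('b, 'o) coll) (Z::('c, 'o) coll).
      opcat C \<and> is_coll C W \<and> is_coll C X \<and> is_coll C Y \<and> is_coll C Z \<longrightarrow>
      coll_skew_axioms C W X Y Z) \<and>
   (\<forall>(C::('o, 'm) opcat) (X::('a, 'o) coll) (X'::('a2, 'o) coll) (X''::('a3, 'o) coll)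
       (Y::('b, 'o) coll) (Y'::('b2, 'o) coll) (Y''::('b3, 'o) coll) f f' g g'.
      opcat C \<and> is_coll C X \<and> is_coll C X' \<and> is_coll C X'' \<and>
      is_coll C Y \<and> is_coll C Y' \<and> is_coll C Y'' \<longrightarrow>
      coll_tensor_functorial C X X' X'' Y Y' Y'' f f' g g') \<and>
   (\<forall>(C::('o, 'm) opcat) (X::('a, 'o) coll) (X'::('a2, 'o) coll) (Y::('b, 'o) coll)
       (Y'::('b2, 'o) coll) (Z::('c, 'o) coll) (Z'::('c2, 'o) coll) f g h.
      opcat C \<and> is_coll C X \<and> is_coll C X' \<and> is_coll C Y \<and> is_coll C Y' \<and>
      is_coll C Z \<and> is_coll C Z' \<longrightarrow>
      coll_skew_natural C X X' Y Y' Z Z' f g h) \<and>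
   \<comment> \<open>Coll(F) = F_! is an opmonoidal functor for every strict operadic functor F\<close>
   (\<forall>(C::('o, 'm) opcat) (D::('o2, 'm2) opcat) F (X::('a, 'o) coll) (X'::('a2, 'o) coll)
       (Y::('b, 'o) coll) (Y'::('b2, 'o) coll) (Z::('c, 'o) coll) f g.
      opcat C \<and> opcat D \<and> strict_opfunctor C D F \<and>
      is_coll C X \<and> is_coll C X' \<and> is_coll C Y \<and> is_coll C Y' \<and> is_coll C Z \<longrightarrow>
      coll_opmonoidal C D F X X' Y Y' Z f g) \<and>
   \<comment> \<open>Coll preserves identities and composition\<close>
   (\<forall>X::('a, 'o) coll. coll_push (opfun_id :: ('o \<Rightarrow> 'o) \<times> ('m \<Rightarrow> 'm)) X = X) \<and>
   (\<forall>t::'a \<times> 'm \<times> 'b list. coll_F2 (opfun_id :: ('o \<Rightarrow> 'o) \<times> ('m \<Rightarrow> 'm)) t = t) \<and>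
   (\<forall>u::'o. coll_F0 (opfun_id :: ('o \<Rightarrow> 'o) \<times> ('m \<Rightarrow> 'm)) u = u) \<and>
   (\<forall>(G::('o2 \<Rightarrow> 'o3) \<times> ('m2 \<Rightarrow> 'm3)) (F::('o \<Rightarrow> 'o2) \<times> ('m \<Rightarrow> 'm2)) (X::('a, 'o) coll).
      coll_push (opfun_comp G F) X = coll_push G (coll_push F X)) \<and>
   (\<forall>(G::('o2 \<Rightarrow> 'o3) \<times> ('m2 \<Rightarrow> 'm3)) (F::('o \<Rightarrow> 'o2) \<times> ('m \<Rightarrow> 'm2)) (t::'a \<times> 'm \<times> 'b list).
      coll_F2 (opfun_comp G F) t = coll_F2 G (coll_F2 F t)) \<and>
   (\<forall>(G::('o2 \<Rightarrow> 'o3) \<times> ('m2 \<Rightarrow> 'm3)) (F::('o \<Rightarrow> 'o2) \<times> ('m \<Rightarrow> 'm2)) (u::'o).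
      coll_F0 (opfun_comp G F) u = coll_F0 G (coll_F0 F u)) \<and>
   \<comment> \<open>C is genuine iff lambda is invertible\<close>
   (\<forall>C::('o, 'm) opcat. opcat C \<longrightarrow>
      (genuine C \<longleftrightarrow>
        (\<forall>X::('a, 'o) coll. is_coll C X \<longrightarrow>
           coll_iso C (coll_tensor C (coll_unit C) X) X coll_lambda)))"
  by (intro conjI allI impI;
      simp add: operadic_category.coll_skew_axioms operadic_category.coll_skew_natural
        operadic_category.genuine_iff_coll_lambda_iso strict_operadic_functor.coll_opmonoidal
        operadic_category_def strict_operadic_functor_def strict_operadic_functor_axioms_def
        coll_tensor_functorial coll_push_def coll_F2_def coll_F0_def opfun_id_def opfun_comp_def
        comp_def del: split_paired_All split: prod.split)

end
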